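(* Let $S=[S_1,\ldots,S_m]$ be a sequence of propositional formulae and $I,J$ models. Then $I \equiv_S J$ holds if and only if $I \equiv_Q J$ holds for every formula $Q = (B_1 \equiv S_1) \wedge \cdots \wedge (B_m \equiv S_m)$, where every $B_i$ is either $\top$ or $\bot$.
   Context: Models are truth assignments. For a formula $F$: $I \leq_F J$ iff $I \models F$ or $J \not\models F$. For a sequence $S=[S_1,\ldots,S_m]$: $I \leq_S J$ iff either $S=[]$, or ($I \leq_{S_1} J$ and (either $J \not\leq_{S_1} I$ or $I \leq_R J$)), where $R=[S_2,\ldots,S_m]$. $I \equiv_S J$ means $I \leq_S J$ and $J \leq_S I$; for a single formula $Q$, $I\equiv_Q J$ means $I\leq_Q J$ and $J\leq_Q I$. *)

theory Defs
  imports Main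
begin

datatype 'v form =
    Var 'v
  | Top
  | Bot
  | Neg "'v form"
  | And "'v form" "'v form"
  | Or "'v form" "'v form"
  | Imp "'v form" "'v form"
  | Iff "'v form" "'v form"

type_synonym 'v model = "'v \<Rightarrow> bool"

fun models :: "'v model \<Rightarrow> 'v form \<Rightarrow> bool" where
  "models I (Var x) = I x"
| "models I Top = True"
| "models I Bot = False"
| "models I (Neg F) = (\<not> models I F)"
| "models I (And F G) = (models I F \<and> models I G)"
| "models I (Or F G) = (models I F \<or> models I G)"
| "models I (Imp F G) = (models I F \<longrightarrow> models I G)"
| "models I (Iff F G) = (models I F = models I G)"

definition le_form :: "'v model \<Rightarrow> 'v form \<Rightarrow> 'v model \<Rightarrow> bool" where
  "le_form I F J \<longleftrightarrow> models I F \<or> \<not> models J F"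

fun le_seq :: "'v model \<Rightarrow> 'v form list \<Rightarrow> 'v model \<Rightarrow> bool" where
  "le_seq I [] J = True"
| "le_seq I (S1 # R) J =
     (le_form I S1 J \<and> (\<not> le_form J S1 I \<or> le_seq I R J))"

definition eq_seq :: "'v model \<Rightarrow> 'v form list \<Rightarrow> 'v model \<Rightarrow> bool" where
  "eq_seq I S J \<longleftrightarrow> le_seq I S J \<and> le_seq J S I"

definition eq_form :: "'v model \<Rightarrow> 'v form \<Rightarrow> 'v model \<Rightarrow> bool" where
  "eq_form I Q J \<longleftrightarrow> le_form I Q J \<and> le_form J Q I"

definition const_form :: "bool \<Rightarrow> 'v form" where
  "const_form b = (if b then Top else Bot)"

fun conj_list :: "'v form list \<Rightarrow> 'v form" where
  "conj_list [] = Top"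
| "conj_list [F] = F"
| "conj_list (F # Fs) = And F (conj_list Fs)"

definition sel_form :: "bool list \<Rightarrow> 'v form list \<Rightarrow> 'v form" where
  "sel_form Bs S = conj_list (map2 (\<lambda>b F. Iff (const_form b) F) Bs S)"

end

theory Submission
  imports Defs
begin

text \<open>Both sides say that I and J agree on every S_i. For \<equiv>_S this follows by induction
  on S, since I \<le>_F J \<and> J \<le>_F I holds exactly when F has the same truth value in I and J.
  A selector formula Q holds in a model precisely when the B_i list the truth values of
  the S_i there, so all such Q are equivalent for I and J iff the two lists of truth
  values coincide.\<close>

lemma eq_form_iff: "eq_form I F J \<longleftrightarrow> (models I F \<longleftrightarrow> models J F)"
  by (auto simp: eq_form_def le_form_def)

lemma eq_seq_iff_map_models_eq:
  "eq_seq I S J \<longleftrightarrow> map (models I) S = map (models J) S"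
  by (induction S) (auto simp: eq_seq_def le_form_def)

lemma models_conj_list: "models I (conj_list Fs) \<longleftrightarrow> (\<forall>F\<in>set Fs. models I F)"
  by (induction Fs rule: conj_list.induct) auto

lemma models_sel_form:
  assumes "length Bs = length S"
  shows "models I (sel_form Bs S) \<longleftrightarrow> Bs = map (models I) S"
  using assms
proof (induction Bs S rule: list_induct2)
  case (Cons b Bs F S)
  then show ?case
    by (auto simp: sel_form_def models_conj_list const_form_def)
qed (simp add: sel_form_def)

theorem theorem1:
  fixes S :: "'v form list" and I J :: "'v model"
  shows "eq_seq I S J \<longleftrightarrow>
           (\<forall>Bs. length Bs = length S \<longrightarrow> eq_form I (sel_form Bs S) J)"
proof -
  have "(\<forall>Bs. length Bs = length S \<longrightarrow> eq_form I (sel_form Bs S) J)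
      \<longleftrightarrow> (\<forall>Bs. length Bs = length S \<longrightarrow>
             (Bs = map (models I) S \<longleftrightarrow> Bs = map (models J) S))"
    by (simp add: eq_form_iff models_sel_form)
  also have "\<dots> \<longleftrightarrow> map (models I) S = map (models J) S"
    by (metis length_map)
  finally show ?thesis
    by (simp add: eq_seq_iff_map_models_eq)
qed

end
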